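(* Let $\mathcal{A}$ and $\mathcal{B}$ be saturated fusion systems over finite $p$-groups $D$ and $E$, and let $\phi:E\to D$ be a group isomorphism inducing an isomorphism of fusion systems $\mathcal{B}\to\mathcal{A}$. Let $Q\le E$, $P=\phi(Q)$, $u\in N_D(P)$, $v\in N_E(Q)$, and suppose there exist an $\mathcal{A}$-isomorphism $\alpha:P\langle u\rangle\to\alpha(P\langle u\rangle)$ and a $\mathcal{B}$-isomorphism $\beta:Q\langle v\rangle\to\beta(Q\langle v\rangle)$ with $\alpha|_P=\phi\beta\phi^{-1}|_P$ and $\alpha(u)=\phi(\beta(v))$. Then (1) there is an $\mathcal{A}$-isomorphism $\psi:P\langle u\rangle\to P\langle\phi(v)\rangle$ with $\psi|_P=\mathrm{id}_P$ and $\psi(u)=\phi(v)$; in particular $u$ and $\phi(v)$ are $\mathcal{N}_\mathcal{A}(P)$-conjugate; (2) there is a $\mathcal{B}$-isomorphism $\omega:Q\langle v\rangle\to Q\langle\phi^{-1}(u)\rangle$ with $\omega|_Q=\mathrm{id}_Q$ and $\omega(v)=\phi^{-1}(u)$; in particular $v$ and $\phi^{-1}(u)$ are $\mathcal{N}_\mathcal{B}(Q)$-conjugate.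
   Context: $\phi$ induces an isomorphism $\mathcal{B}\to\mathcal{A}$ means $\mathrm{Hom}_\mathcal{A}(\phi(R),\phi(S))=\phi\circ\mathrm{Hom}_\mathcal{B}(R,S)\circ\phi^{-1}$ for all $R,S\le E$. $\mathcal{N}_\mathcal{A}(P)$ is the normalizer subsystem of $P$ in $\mathcal{A}$; elements $x,y$ are $\mathcal{F}$-conjugate if some $\mathcal{F}$-isomorphism $\langle x\rangle\to\langle y\rangle$ sends $x$ to $y$. *)

theory Defs
  imports "HOL-Algebra.Algebra" "HOL-Computational_Algebra.Primes"
begin

text \<open>A fusion system over a group G is represented by its Hom-sets:
  F P Q is the set of F-morphisms from P to Q. Morphisms are functions
  that are extensional on their domain (undefined outside P).\<close>

type_synonym 'a fusion = "'a set \<Rightarrow> 'a set \<Rightarrow> ('a \<Rightarrow> 'a) set"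

definition finite_p_group :: "nat \<Rightarrow> ('a, 'm) monoid_scheme \<Rightarrow> bool" where
  "finite_p_group p G \<longleftrightarrow> group G \<and> Factorial_Ring.prime p \<and> finite (carrier G)
     \<and> (\<exists>n. card (carrier G) = p ^ n)"

definition conj_map :: "('a, 'm) monoid_scheme \<Rightarrow> 'a \<Rightarrow> 'a set \<Rightarrow> ('a \<Rightarrow> 'a)" where
  "conj_map G g P = restrict (\<lambda>x. g \<otimes>\<^bsub>G\<^esub> x \<otimes>\<^bsub>G\<^esub> inv\<^bsub>G\<^esub> g) P"

definition hom_conj :: "('a, 'm) monoid_scheme \<Rightarrow> 'a fusion" where
  "hom_conj G P Q = {conj_map G g P | g. g \<in> carrier G
      \<and> (\<lambda>x. g \<otimes>\<^bsub>G\<^esub> x \<otimes>\<^bsub>G\<^esub> inv\<^bsub>G\<^esub> g) ` P \<subseteq> Q}"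

definition inj_homs :: "('a, 'm) monoid_scheme \<Rightarrow> 'a fusion" where
  "inj_homs G P Q = {f. f \<in> extensional P
      \<and> f \<in> hom (G\<lparr>carrier := P\<rparr>) (G\<lparr>carrier := Q\<rparr>) \<and> inj_on f P}"

definition fusion_system :: "('a, 'm) monoid_scheme \<Rightarrow> 'a fusion \<Rightarrow> bool" where
  "fusion_system G F \<longleftrightarrow>
     (\<forall>P Q. \<not> (subgroup P G \<and> subgroup Q G) \<longrightarrow> F P Q = {}) \<and>
     (\<forall>P Q. subgroup P G \<and> subgroup Q G \<longrightarrow>
        hom_conj G P Q \<subseteq> F P Q \<and> F P Q \<subseteq> inj_homs G P Q) \<and>
     (\<forall>P Q R f g. f \<in> F P Q \<longrightarrow> g \<in> F Q R \<longrightarrow> restrict (g \<circ> f) P \<in> F P R) \<and>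
     (\<forall>P Q f. f \<in> F P Q \<longrightarrow>
        f \<in> F P (f ` P) \<and> restrict (inv_into P f) (f ` P) \<in> F (f ` P) P)"

definition centralizer_grp :: "('a, 'm) monoid_scheme \<Rightarrow> 'a set \<Rightarrow> 'a set" where
  "centralizer_grp G P = {g \<in> carrier G. \<forall>x\<in>P. g \<otimes>\<^bsub>G\<^esub> x = x \<otimes>\<^bsub>G\<^esub> g}"

definition fully_normalized :: "('a, 'm) monoid_scheme \<Rightarrow> 'a fusion \<Rightarrow> 'a set \<Rightarrow> bool" where
  "fully_normalized G F P \<longleftrightarrow> subgroup P G \<and>
     (\<forall>f \<in> F P (carrier G). card (normalizer G (f ` P)) \<le> card (normalizer G P))"

definition fully_centralized :: "('a, 'm) monoid_scheme \<Rightarrow> 'a fusion \<Rightarrow> 'a set \<Rightarrow> bool" where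
  "fully_centralized G F P \<longleftrightarrow> subgroup P G \<and>
     (\<forall>f \<in> F P (carrier G). card (centralizer_grp G (f ` P)) \<le> card (centralizer_grp G P))"

definition ext_group :: "('a, 'm) monoid_scheme \<Rightarrow> 'a set \<Rightarrow> ('a \<Rightarrow> 'a) \<Rightarrow> 'a set" where
  "ext_group G P f = {g \<in> normalizer G P. \<exists>h \<in> normalizer G (f ` P).
      \<forall>y \<in> f ` P. f (g \<otimes>\<^bsub>G\<^esub> inv_into P f y \<otimes>\<^bsub>G\<^esub> inv\<^bsub>G\<^esub> g)
                   = h \<otimes>\<^bsub>G\<^esub> y \<otimes>\<^bsub>G\<^esub> inv\<^bsub>G\<^esub> h}"

text \<open>Saturation (Broto--Levi--Oliver): (I) every fully normalized P is fully
  centralized and Aut_G(P) is a Sylow p-subgroup of Aut_F(P) (index prime to p);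
  (II) the extension axiom.\<close>
definition saturated_fusion_system :: "nat \<Rightarrow> ('a, 'm) monoid_scheme \<Rightarrow> 'a fusion \<Rightarrow> bool" where
  "saturated_fusion_system p G F \<longleftrightarrow> finite_p_group p G \<and> fusion_system G F \<and>
     (\<forall>P. fully_normalized G F P \<longrightarrow> fully_centralized G F P \<and>
          \<not> p dvd (card (F P P) div card (hom_conj G P P))) \<and>
     (\<forall>P f. subgroup P G \<longrightarrow> f \<in> F P (carrier G) \<longrightarrow> fully_centralized G F (f ` P) \<longrightarrow>
          (\<exists>g \<in> F (ext_group G P f) (carrier G). \<forall>x\<in>P. g x = f x))"

definition induces_fusion_iso ::
  "('b, 'n) monoid_scheme \<Rightarrow> ('a, 'm) monoid_scheme \<Rightarrow> ('b \<Rightarrow> 'a) \<Rightarrow> 'b fusion \<Rightarrow> 'a fusion \<Rightarrow> bool" where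
  "induces_fusion_iso E D \<phi> B A \<longleftrightarrow> \<phi> \<in> iso E D \<and>
     (\<forall>R S. subgroup R E \<longrightarrow> subgroup S E \<longrightarrow>
        A (\<phi> ` R) (\<phi> ` S) =
          {restrict (\<phi> \<circ> f \<circ> inv_into (carrier E) \<phi>) (\<phi> ` R) | f. f \<in> B R S})"

definition normalizer_subsystem :: "('a, 'm) monoid_scheme \<Rightarrow> 'a fusion \<Rightarrow> 'a set \<Rightarrow> 'a fusion" where
  "normalizer_subsystem G F P R S = {f \<in> F R S. R \<subseteq> normalizer G P \<and> S \<subseteq> normalizer G P \<and>
      (\<exists>\<psi> \<in> F (generate G (P \<union> R)) (generate G (P \<union> S)).
          \<psi> ` P = P \<and> (\<forall>x\<in>R. \<psi> x = f x))}"

definition fusion_conjugate :: "('a, 'm) monoid_scheme \<Rightarrow> 'a fusion \<Rightarrow> 'a \<Rightarrow> 'a \<Rightarrow> bool" where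
  "fusion_conjugate G F x y \<longleftrightarrow>
     (\<exists>f \<in> F (generate G {x}) (generate G {y}).
        f ` generate G {x} = generate G {y} \<and> f x = y)"

end

(* Transporting \<beta> along \<phi> gives an A-morphism \<phi>\<beta>\<phi>\<inverse> on P<\<phi> v> that takes the same values
   as \<alpha> on the generators P and u resp. \<phi> v. Two morphisms agreeing on generators have the
   same image, so \<psi> = (\<phi>\<beta>\<phi>\<inverse>)\<inverse> \<circ> \<alpha> is an A-isomorphism P<u> \<rightarrow> P<\<phi> v> fixing P with
   \<psi> u = \<phi> v. Pulling \<alpha> back along \<phi> instead gives \<omega> = \<beta>\<inverse> \<circ> \<phi>\<inverse>\<alpha>\<phi> in B. Restricting \<psi>
   (resp. \<omega>) to the cyclic subgroup gives the conjugacy in the normalizer subsystem, with \<psi>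
   itself as the required extension normalizing P. *)

theory Submission
  imports Defs
begin

lemma normalizer_conj_image_eq:
  assumes "group G" and "subgroup H G"
  shows "normalizer G H = {g \<in> carrier G. (\<lambda>h. g \<otimes>\<^bsub>G\<^esub> h \<otimes>\<^bsub>G\<^esub> inv\<^bsub>G\<^esub> g) ` H = H}"
proof -
  have "\<And>g. g <#\<^bsub>G\<^esub> H #>\<^bsub>G\<^esub> inv\<^bsub>G\<^esub> g = (\<lambda>h. g \<otimes>\<^bsub>G\<^esub> h \<otimes>\<^bsub>G\<^esub> inv\<^bsub>G\<^esub> g) ` H"
    unfolding l_coset_def r_coset_def by auto
  then show ?thesis
    using subgroup.subset[OF assms(2)] unfolding normalizer_def stabilizer_def by auto
qed

lemma subgroup_hom_group_hom:
  fixes G :: "('a, 'm) monoid_scheme"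
  assumes "group G" and "subgroup S G" and "subgroup T G"
    and "f \<in> hom (G\<lparr>carrier := S\<rparr>) (G\<lparr>carrier := T\<rparr>)"
  shows "group_hom (G\<lparr>carrier := S\<rparr>) (G\<lparr>carrier := T\<rparr>) f"
  using assms group.subgroup_imp_group[OF assms(1)] by (simp add: group_hom_axioms_def group_hom_def)

lemma subgroup_hom_generate_image:
  fixes G :: "('a, 'm) monoid_scheme"
  assumes G: "group G" and S: "subgroup S G" and T: "subgroup T G"
    and f: "f \<in> hom (G\<lparr>carrier := S\<rparr>) (G\<lparr>carrier := T\<rparr>)" and K: "K \<subseteq> S"
  shows "f ` generate G K = generate G (f ` K)"
proof -
  interpret group_hom "G\<lparr>carrier := S\<rparr>" "G\<lparr>carrier := T\<rparr>" f
    by (rule subgroup_hom_group_hom[OF G S T f])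
  have "f ` K \<subseteq> T" using f K unfolding hom_def by auto
  then show ?thesis
    using generate_img[of K] K group.generate_consistent[OF G] S T by simp
qed

lemma generate_insert_eq_generate_union_singleton:
  fixes G :: "('a, 'm) monoid_scheme"
  assumes G: "group G" and P: "P \<subseteq> carrier G" and x: "x \<in> carrier G"
  shows "generate G (P \<union> generate G {x}) = generate G (insert x P)"
proof
  have "subgroup (generate G (insert x P)) G"
    using group.generate_is_subgroup[OF G] P x by auto
  moreover have "P \<union> generate G {x} \<subseteq> generate G (insert x P)"
    using group.mono_generate[OF G, of "{x}"] generate.incl[of _ "insert x P" G] by blast
  ultimately show "generate G (P \<union> generate G {x}) \<subseteq> generate G (insert x P)"
    using group.generate_subgroup_incl[OF G] by blast
next
  have "insert x P \<subseteq> P \<union> generate G {x}" using generate.incl[of x "{x}" G] by blast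
  then show "generate G (insert x P) \<subseteq> generate G (P \<union> generate G {x})"
    using group.mono_generate[OF G] by blast
qed

text \<open>Since \<open>f\<close> fixes \<open>P\<close> and \<open>x h x\<inverse> \<in> P\<close>, applying \<open>f\<close> shows that \<open>f x\<close> conjugates each
  \<open>h \<in> P\<close> exactly as \<open>x\<close> does.\<close>
lemma normalizer_image_of_hom_fixing:
  fixes G :: "('a, 'm) monoid_scheme"
  assumes G: "group G" and P: "subgroup P G" and x: "x \<in> normalizer G P"
    and T: "subgroup T G"
    and f: "f \<in> hom (G\<lparr>carrier := generate G (insert x P)\<rparr>) (G\<lparr>carrier := T\<rparr>)"
    and fix_P: "\<forall>z\<in>P. f z = z"
  shows "f x \<in> normalizer G P"
proof -
  let ?S = "generate G (insert x P)"
  note N = normalizer_conj_image_eq[OF G P]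
  have x_carrier: "x \<in> carrier G" using x N by auto
  have S: "subgroup ?S G"
    using group.generate_is_subgroup[OF G] subgroup.subset[OF P] x_carrier by auto
  interpret f: group_hom "G\<lparr>carrier := ?S\<rparr>" "G\<lparr>carrier := T\<rparr>" f
    by (rule subgroup_hom_group_hom[OF G S T f])
  have xS: "x \<in> ?S" and PS: "P \<subseteq> ?S" using generate.incl[of _ "insert x P" G] by blast+
  have fx_T: "f x \<in> T" using f.hom_closed xS by simp
  have conj_eq: "f x \<otimes>\<^bsub>G\<^esub> h \<otimes>\<^bsub>G\<^esub> inv\<^bsub>G\<^esub> f x = x \<otimes>\<^bsub>G\<^esub> h \<otimes>\<^bsub>G\<^esub> inv\<^bsub>G\<^esub> x" if h: "h \<in> P" for h
  proof -
    have hS: "h \<in> ?S" using h PS by auto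
    have "f (x \<otimes>\<^bsub>G\<^esub> h \<otimes>\<^bsub>G\<^esub> inv\<^bsub>G\<^esub> x) = f x \<otimes>\<^bsub>G\<^esub> f h \<otimes>\<^bsub>G\<^esub> f (inv\<^bsub>G\<^esub> x)"
      using f.hom_mult xS hS subgroup.m_closed[OF S] subgroup.m_inv_closed[OF S]
      by (simp add: group.m_inv_consistent[OF G S, symmetric])
    also have "\<dots> = f x \<otimes>\<^bsub>G\<^esub> h \<otimes>\<^bsub>G\<^esub> inv\<^bsub>G\<^esub> f x"
      using f.hom_inv[of x] xS fx_T fix_P h
      by (simp add: group.m_inv_consistent[OF G S] group.m_inv_consistent[OF G T])
    moreover have "x \<otimes>\<^bsub>G\<^esub> h \<otimes>\<^bsub>G\<^esub> inv\<^bsub>G\<^esub> x \<in> P" using x N h by blast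
    ultimately show ?thesis using fix_P by simp
  qed
  have "f x \<in> carrier G" using fx_T subgroup.subset[OF T] by auto
  moreover have "(\<lambda>h. f x \<otimes>\<^bsub>G\<^esub> h \<otimes>\<^bsub>G\<^esub> inv\<^bsub>G\<^esub> f x) ` P = (\<lambda>h. x \<otimes>\<^bsub>G\<^esub> h \<otimes>\<^bsub>G\<^esub> inv\<^bsub>G\<^esub> x) ` P"
    using conj_eq by (rule image_cong[OF refl])
  ultimately show ?thesis using x N by auto
qed

lemma fusion_system_subgroups:
  "fusion_system G F \<Longrightarrow> f \<in> F S T \<Longrightarrow> subgroup S G \<and> subgroup T G"
  unfolding fusion_system_def by blast

lemma fusion_system_morphismD:
  assumes "fusion_system G F" and "f \<in> F S T"
  shows "f \<in> extensional S" and "f \<in> hom (G\<lparr>carrier := S\<rparr>) (G\<lparr>carrier := T\<rparr>)"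
    and "inj_on f S"
  using assms fusion_system_subgroups[OF assms]
  unfolding fusion_system_def inj_homs_def by blast+

lemma fusion_system_morphism_closed:
  "fusion_system G F \<Longrightarrow> f \<in> F S T \<Longrightarrow> x \<in> S \<Longrightarrow> f x \<in> T"
  using fusion_system_morphismD(2) unfolding hom_def by fastforce

lemma fusion_system_comp:
  "fusion_system G F \<Longrightarrow> f \<in> F S T \<Longrightarrow> g \<in> F T R \<Longrightarrow> restrict (g \<circ> f) S \<in> F S R"
  unfolding fusion_system_def by blast

lemma fusion_system_onto_image:
  "fusion_system G F \<Longrightarrow> f \<in> F S T \<Longrightarrow> f \<in> F S (f ` S)"
  unfolding fusion_system_def by blast

lemma fusion_system_inv_into:
  "fusion_system G F \<Longrightarrow> f \<in> F S T \<Longrightarrow> restrict (inv_into S f) (f ` S) \<in> F (f ` S) S"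
  unfolding fusion_system_def by blast

lemma fusion_system_inclusion:
  fixes G :: "('a, 'm) monoid_scheme"
  assumes fs: "fusion_system G F" and G: "group G"
    and S: "subgroup S G" and T: "subgroup T G" and ST: "S \<subseteq> T"
  shows "restrict id S \<in> F S T"
proof -
  interpret group G by (rule G)
  have conj_one: "\<one>\<^bsub>G\<^esub> \<otimes>\<^bsub>G\<^esub> z \<otimes>\<^bsub>G\<^esub> inv\<^bsub>G\<^esub> \<one>\<^bsub>G\<^esub> = z" if "z \<in> S" for z
    using subgroup.mem_carrier[OF S that] by simp
  have "conj_map G \<one>\<^bsub>G\<^esub> S = restrict id S"
    unfolding conj_map_def using conj_one by (intro restrict_ext) auto
  moreover have "conj_map G \<one>\<^bsub>G\<^esub> S \<in> hom_conj G S T"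
    unfolding hom_conj_def using ST conj_one by (auto intro!: exI[of _ "\<one>\<^bsub>G\<^esub>"])
  moreover have "hom_conj G S T \<subseteq> F S T"
    using fs S T unfolding fusion_system_def by blast
  ultimately show ?thesis by auto
qed

lemma fusion_system_restrict:
  fixes G :: "('a, 'm) monoid_scheme"
  assumes fs: "fusion_system G F" and G: "group G" and f: "f \<in> F S T"
    and K: "subgroup K G" and KS: "K \<subseteq> S"
  shows "restrict f K \<in> F K T"
proof -
  have "subgroup S G" using fusion_system_subgroups[OF fs f] by blast
  then have "restrict (f \<circ> restrict id K) K \<in> F K T"
    using fusion_system_comp[OF fs fusion_system_inclusion[OF fs G K _ KS] f] by blast
  moreover have "restrict (f \<circ> restrict id K) K = restrict f K"
    by (intro restrict_ext) auto
  ultimately show ?thesis by simp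
qed

lemma fusion_system_enlarge_codomain:
  fixes G :: "('a, 'm) monoid_scheme"
  assumes fs: "fusion_system G F" and G: "group G" and f: "f \<in> F S T"
    and T': "subgroup T' G" and TT': "T \<subseteq> T'"
  shows "f \<in> F S T'"
proof -
  have "subgroup T G" using fusion_system_subgroups[OF fs f] by blast
  then have "restrict (restrict id T \<circ> f) S \<in> F S T'"
    using fusion_system_comp[OF fs f fusion_system_inclusion[OF fs G _ T' TT']] by blast
  moreover have "f ` S \<subseteq> T"
    using fusion_system_morphismD(2)[OF fs f] unfolding hom_def by auto
  then have "restrict (restrict id T \<circ> f) S = f"
    using fusion_system_morphismD(1)[OF fs f] by (force simp: fun_eq_iff extensional_def)
  ultimately show ?thesis by simp
qed

text \<open>The witness is \<open>\<beta>\<inverse> \<circ> \<alpha>\<close>; it is defined on all of \<open>\<langle>u, P\<rangle>\<close> because \<open>\<alpha>\<close> and \<open>\<beta>\<close> agree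
  on generating sets, hence have the same image.\<close>
lemma fusion_system_iso_fixing_of_agreeing:
  fixes G :: "('a, 'm) monoid_scheme"
  assumes fs: "fusion_system G F" and G: "group G"
    and \<alpha>: "\<alpha> \<in> F (generate G (insert u P)) S"
    and \<beta>: "\<beta> \<in> F (generate G (insert w P)) T"
    and agree_P: "\<forall>x\<in>P. \<alpha> x = \<beta> x" and agree_uw: "\<alpha> u = \<beta> w"
  shows "\<exists>\<psi> \<in> F (generate G (insert u P)) (generate G (insert w P)).
           \<psi> ` generate G (insert u P) = generate G (insert w P) \<and>
           (\<forall>x\<in>P. \<psi> x = x) \<and> \<psi> u = w"
proof -
  let ?U = "generate G (insert u P)" and ?W = "generate G (insert w P)"
  have U: "insert u P \<subseteq> ?U" and W: "insert w P \<subseteq> ?W"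
    using generate.incl[of _ "insert u P" G] generate.incl[of _ "insert w P" G] by blast+
  have \<beta>_inj: "inj_on \<beta> ?W" by (rule fusion_system_morphismD(3)[OF fs \<beta>])
  have "\<alpha> ` ?U = generate G (\<alpha> ` insert u P)"
    using subgroup_hom_generate_image[OF G _ _ fusion_system_morphismD(2)[OF fs \<alpha>] U]
      fusion_system_subgroups[OF fs \<alpha>] by blast
  also have "\<alpha> ` insert u P = \<beta> ` insert w P" using agree_P agree_uw by auto
  also have "generate G (\<beta> ` insert w P) = \<beta> ` ?W"
    using subgroup_hom_generate_image[OF G _ _ fusion_system_morphismD(2)[OF fs \<beta>] W]
      fusion_system_subgroups[OF fs \<beta>] by blast
  finally have same_image: "\<alpha> ` ?U = \<beta> ` ?W" .
  define \<psi> where "\<psi> = restrict (restrict (inv_into ?W \<beta>) (\<beta> ` ?W) \<circ> \<alpha>) ?U"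
  have "\<alpha> \<in> F ?U (\<beta> ` ?W)" using fusion_system_onto_image[OF fs \<alpha>] same_image by simp
  then have "\<psi> \<in> F ?U ?W"
    unfolding \<psi>_def by (rule fusion_system_comp[OF fs _ fusion_system_inv_into[OF fs \<beta>]])
  moreover have \<psi>_eq: "\<psi> z = inv_into ?W \<beta> (\<alpha> z)" if "z \<in> ?U" for z
    unfolding \<psi>_def using that same_image by auto
  moreover have "\<psi> ` ?U = ?W"
    using \<psi>_eq same_image inv_into_image_cancel[OF \<beta>_inj order_refl]
    by (simp flip: image_image)
  moreover have "\<psi> x = x" if "x \<in> P" for x
  proof -
    have "x \<in> ?U" "x \<in> ?W" using that U W by auto
    then show ?thesis using \<psi>_eq that agree_P inv_into_f_f[OF \<beta>_inj] by simp
  qed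
  moreover have "\<psi> u = w"
    using \<psi>_eq[of u] U W agree_uw inv_into_f_f[OF \<beta>_inj] by auto
  ultimately show ?thesis by blast
qed

lemma fusion_conjugate_normalizer_subsystem:
  fixes G :: "('a, 'm) monoid_scheme"
  assumes fs: "fusion_system G F" and G: "group G" and P: "subgroup P G"
    and x: "x \<in> normalizer G P"
    and \<psi>: "\<psi> \<in> F (generate G (insert x P)) (generate G (insert y P))"
    and fix_P: "\<forall>z\<in>P. \<psi> z = z" and \<psi>_x: "\<psi> x = y"
  shows "fusion_conjugate G (normalizer_subsystem G F P) x y"
proof -
  let ?S = "generate G (insert x P)" and ?T = "generate G (insert y P)"
  let ?X = "generate G {x}" and ?Y = "generate G {y}"
  note N = normalizer_conj_image_eq[OF G P]
  have ST: "subgroup ?S G" "subgroup ?T G" using fusion_system_subgroups[OF fs \<psi>] by blast+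
  have \<psi>_hom: "\<psi> \<in> hom (G\<lparr>carrier := ?S\<rparr>) (G\<lparr>carrier := ?T\<rparr>)"
    by (rule fusion_system_morphismD(2)[OF fs \<psi>])
  have y: "y \<in> normalizer G P"
    using normalizer_image_of_hom_fixing[OF G P x ST(2) \<psi>_hom fix_P] \<psi>_x by simp
  have x_carrier: "x \<in> carrier G" and y_carrier: "y \<in> carrier G" using x y N by auto
  have X: "subgroup ?X G" using group.generate_is_subgroup[OF G] x_carrier by auto
  have "?X \<subseteq> ?S" using group.mono_generate[OF G] by auto
  then have "restrict \<psi> ?X \<in> F ?X ?T" by (rule fusion_system_restrict[OF fs G \<psi> X])
  moreover have img: "restrict \<psi> ?X ` ?X = ?Y"
    using subgroup_hom_generate_image[OF G ST \<psi>_hom, of "{x}"] generate.incl[of x "insert x P" G] \<psi>_x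
    by simp
  ultimately have \<psi>_X: "restrict \<psi> ?X \<in> F ?X ?Y" using fusion_system_onto_image[OF fs] by metis
  have "\<psi> ` P = P" using fix_P by simp
  moreover have "\<psi> \<in> F (generate G (P \<union> ?X)) (generate G (P \<union> ?Y))"
    using \<psi> generate_insert_eq_generate_union_singleton[OF G subgroup.subset[OF P]] x_carrier y_carrier
    by simp
  moreover have "?X \<subseteq> normalizer G P" "?Y \<subseteq> normalizer G P"
    using group.generate_subgroup_incl[OF G _ group.normalizer_imp_subgroup[OF G subgroup.subset[OF P]]]
      x y by blast+
  ultimately have "restrict \<psi> ?X \<in> normalizer_subsystem G F P ?X ?Y"
    unfolding normalizer_subsystem_def using \<psi>_X by auto
  moreover have "x \<in> ?X" by (rule generate.incl) simp
  ultimately show ?thesis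
    unfolding fusion_conjugate_def using img \<psi>_x by (intro bexI[of _ "restrict \<psi> ?X"]) auto
qed

lemma induces_fusion_iso_image:
  assumes ind: "induces_fusion_iso E D \<phi> B A" and R: "subgroup R E" and S: "subgroup S E"
    and f: "f \<in> B R S"
  shows "\<exists>g \<in> A (\<phi> ` R) (\<phi> ` S). \<forall>y\<in>R. g (\<phi> y) = \<phi> (f y)"
proof -
  have "inj_on \<phi> (carrier E)" using ind unfolding induces_fusion_iso_def iso_def bij_betw_def by blast
  then have "\<forall>y\<in>R. restrict (\<phi> \<circ> f \<circ> inv_into (carrier E) \<phi>) (\<phi> ` R) (\<phi> y) = \<phi> (f y)"
    using subgroup.subset[OF R] by auto
  moreover have "restrict (\<phi> \<circ> f \<circ> inv_into (carrier E) \<phi>) (\<phi> ` R) \<in> A (\<phi> ` R) (\<phi> ` S)"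
    using ind R S f unfolding induces_fusion_iso_def by blast
  ultimately show ?thesis by blast
qed

lemma induces_fusion_iso_preimage:
  assumes ind: "induces_fusion_iso E D \<phi> B A" and R: "subgroup R E" and S: "subgroup S E"
    and g: "g \<in> A (\<phi> ` R) (\<phi> ` S)"
  shows "\<exists>f \<in> B R S. \<forall>y\<in>R. g (\<phi> y) = \<phi> (f y)"
proof -
  have "inj_on \<phi> (carrier E)" using ind unfolding induces_fusion_iso_def iso_def bij_betw_def by blast
  moreover obtain f where f: "f \<in> B R S" and "g = restrict (\<phi> \<circ> f \<circ> inv_into (carrier E) \<phi>) (\<phi> ` R)"
    using ind R S g unfolding induces_fusion_iso_def by blast
  ultimately have "\<forall>y\<in>R. g (\<phi> y) = \<phi> (f y)" using subgroup.subset[OF R] by auto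
  with f show ?thesis by blast
qed

lemma induces_fusion_iso_image_generate:
  assumes ind: "induces_fusion_iso E D \<phi> B A" and fs: "fusion_system E B"
    and E: "group E" and D: "group D" and Q: "subgroup Q E" and v: "v \<in> carrier E"
    and \<beta>: "\<beta> \<in> B (generate E (insert v Q)) T"
  shows "\<exists>\<beta>' \<in> A (generate D (insert (\<phi> v) (\<phi> ` Q))) (\<phi> ` T).
           \<forall>y \<in> generate E (insert v Q). \<beta>' (\<phi> y) = \<phi> (\<beta> y)"
proof -
  interpret group_hom E D \<phi>
    using ind E D unfolding induces_fusion_iso_def iso_def group_hom_def group_hom_axioms_def by blast
  have "\<phi> ` generate E (insert v Q) = generate D (insert (\<phi> v) (\<phi> ` Q))"
    using generate_img[of "insert v Q"] subgroup.subset[OF Q] v by simp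
  then show ?thesis
    using induces_fusion_iso_image[OF ind _ _ \<beta>] fusion_system_subgroups[OF fs \<beta>] by simp
qed

lemma induces_fusion_iso_preimage_generate:
  assumes ind: "induces_fusion_iso E D \<phi> B A" and fs: "fusion_system D A"
    and E: "group E" and D: "group D" and Q: "subgroup Q E" and u: "u \<in> carrier D"
    and \<alpha>: "\<alpha> \<in> A (generate D (insert u (\<phi> ` Q))) T"
  shows "\<exists>\<alpha>' \<in> B (generate E (insert (inv_into (carrier E) \<phi> u) Q)) (carrier E).
           \<forall>y \<in> generate E (insert (inv_into (carrier E) \<phi> u) Q). \<alpha> (\<phi> y) = \<phi> (\<alpha>' y)"
proof -
  interpret group_hom E D \<phi>
    using ind E D unfolding induces_fusion_iso_def iso_def group_hom_def group_hom_axioms_def by blast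
  have \<phi>_onto: "\<phi> ` carrier E = carrier D"
    using ind unfolding induces_fusion_iso_def iso_def bij_betw_def by blast
  let ?u' = "inv_into (carrier E) \<phi> u"
  have "?u' \<in> carrier E" "\<phi> ?u' = u" using u \<phi>_onto by (auto intro: inv_into_into f_inv_into_f)
  then have U: "\<phi> ` generate E (insert ?u' Q) = generate D (insert u (\<phi> ` Q))"
    using generate_img[of "insert ?u' Q"] subgroup.subset[OF Q] by simp
  have "T \<subseteq> carrier D" using fusion_system_subgroups[OF fs \<alpha>] subgroup.subset by blast
  then have "\<alpha> \<in> A (\<phi> ` generate E (insert ?u' Q)) (\<phi> ` carrier E)"
    using fusion_system_enlarge_codomain[OF fs D \<alpha> group.subgroup_self[OF D]] U \<phi>_onto by simp
  moreover have "subgroup (generate E (insert ?u' Q)) E"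
    using group.generate_is_subgroup[OF E] subgroup.subset[OF Q] \<open>?u' \<in> carrier E\<close> by simp
  ultimately show ?thesis
    using induces_fusion_iso_preimage[OF ind _ group.subgroup_self[OF E]] by blast
qed

lemma induces_fusion_iso_fixing_iso_image:
  assumes ind: "induces_fusion_iso E D \<phi> B A"
    and fsA: "fusion_system D A" and fsB: "fusion_system E B"
    and E: "group E" and D: "group D" and Q: "subgroup Q E" and v: "v \<in> carrier E"
    and \<alpha>: "\<alpha> \<in> A (generate D (insert u (\<phi> ` Q))) S"
    and \<beta>: "\<beta> \<in> B (generate E (insert v Q)) T"
    and agree_Q: "\<forall>q\<in>Q. \<alpha> (\<phi> q) = \<phi> (\<beta> q)" and agree_uv: "\<alpha> u = \<phi> (\<beta> v)"
  shows "\<exists>\<psi> \<in> A (generate D (insert u (\<phi> ` Q))) (generate D (insert (\<phi> v) (\<phi> ` Q))).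
           \<psi> ` generate D (insert u (\<phi> ` Q)) = generate D (insert (\<phi> v) (\<phi> ` Q)) \<and>
           (\<forall>x\<in>\<phi> ` Q. \<psi> x = x) \<and> \<psi> u = \<phi> v"
proof -
  obtain \<beta>' where \<beta>': "\<beta>' \<in> A (generate D (insert (\<phi> v) (\<phi> ` Q))) (\<phi> ` T)"
    and \<beta>'_\<phi>: "\<forall>y \<in> generate E (insert v Q). \<beta>' (\<phi> y) = \<phi> (\<beta> y)"
    using induces_fusion_iso_image_generate[OF ind fsB E D Q v \<beta>] by blast
  have "Q \<subseteq> generate E (insert v Q)" and "v \<in> generate E (insert v Q)"
    using generate.incl[of _ "insert v Q" E] by blast+
  then have "\<forall>x\<in>\<phi> ` Q. \<alpha> x = \<beta>' x" and "\<alpha> u = \<beta>' (\<phi> v)"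
    using agree_Q agree_uv \<beta>'_\<phi> by auto
  then show ?thesis by (rule fusion_system_iso_fixing_of_agreeing[OF fsA D \<alpha> \<beta>'])
qed

lemma induces_fusion_iso_fixing_iso_preimage:
  assumes ind: "induces_fusion_iso E D \<phi> B A"
    and fsA: "fusion_system D A" and fsB: "fusion_system E B"
    and E: "group E" and D: "group D" and Q: "subgroup Q E" and u: "u \<in> carrier D"
    and \<alpha>: "\<alpha> \<in> A (generate D (insert u (\<phi> ` Q))) S"
    and \<beta>: "\<beta> \<in> B (generate E (insert v Q)) T"
    and agree_Q: "\<forall>q\<in>Q. \<alpha> (\<phi> q) = \<phi> (\<beta> q)" and agree_uv: "\<alpha> u = \<phi> (\<beta> v)"
  shows "\<exists>\<omega> \<in> B (generate E (insert v Q)) (generate E (insert (inv_into (carrier E) \<phi> u) Q)).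
           \<omega> ` generate E (insert v Q) = generate E (insert (inv_into (carrier E) \<phi> u) Q) \<and>
           (\<forall>x\<in>Q. \<omega> x = x) \<and> \<omega> v = inv_into (carrier E) \<phi> u"
proof -
  let ?u' = "inv_into (carrier E) \<phi> u"
  have \<phi>_inj: "inj_on \<phi> (carrier E)" and \<phi>_onto: "\<phi> ` carrier E = carrier D"
    using ind unfolding induces_fusion_iso_def iso_def bij_betw_def by blast+
  obtain \<alpha>' where \<alpha>': "\<alpha>' \<in> B (generate E (insert ?u' Q)) (carrier E)"
    and \<alpha>'_\<phi>: "\<forall>y \<in> generate E (insert ?u' Q). \<alpha> (\<phi> y) = \<phi> (\<alpha>' y)"
    using induces_fusion_iso_preimage_generate[OF ind fsA E D Q u \<alpha>] by blast
  have Q_sub: "Q \<subseteq> generate E (insert v Q)" and v_sub: "v \<in> generate E (insert v Q)"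
    and Q_sub': "Q \<subseteq> generate E (insert ?u' Q)" and u'_sub: "?u' \<in> generate E (insert ?u' Q)"
    using generate.incl[of _ "insert v Q" E] generate.incl[of _ "insert ?u' Q" E] by blast+
  have \<phi>_u': "\<phi> ?u' = u" using u \<phi>_onto by (simp add: f_inv_into_f)
  have \<beta>_eq_\<alpha>': "\<beta> x = \<alpha>' y" if "\<phi> (\<beta> x) = \<phi> (\<alpha>' y)"
    and "x \<in> generate E (insert v Q)" and "y \<in> generate E (insert ?u' Q)" for x y
  proof (rule inj_onD[OF \<phi>_inj that(1)])
    show "\<beta> x \<in> carrier E"
      using fusion_system_morphism_closed[OF fsB \<beta> that(2)] fusion_system_subgroups[OF fsB \<beta>]
        subgroup.subset by blast
    show "\<alpha>' y \<in> carrier E" by (rule fusion_system_morphism_closed[OF fsB \<alpha>' that(3)])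
  qed
  have "\<forall>q\<in>Q. \<beta> q = \<alpha>' q"
    using \<beta>_eq_\<alpha>' agree_Q \<alpha>'_\<phi> Q_sub Q_sub' by (metis subsetD)
  moreover have "\<beta> v = \<alpha>' ?u'"
    using \<beta>_eq_\<alpha>' \<alpha>'_\<phi> agree_uv \<phi>_u' v_sub u'_sub by metis
  ultimately show ?thesis by (rule fusion_system_iso_fixing_of_agreeing[OF fsB E \<beta> \<alpha>'])
qed

theorem lemma8p3:
  fixes p :: nat
    and D :: "'a monoid" and E :: "'b monoid"
    and A :: "'a fusion" and B :: "'b fusion"
    and \<phi> :: "'b \<Rightarrow> 'a" and Q :: "'b set" and P :: "'a set"
    and u :: 'a and v :: 'b and \<alpha> :: "'a \<Rightarrow> 'a" and \<beta> :: "'b \<Rightarrow> 'b"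
  assumes satA: "saturated_fusion_system p D A"
    and satB: "saturated_fusion_system p E B"
    and iso: "\<phi> \<in> iso E D"
    and ind: "induces_fusion_iso E D \<phi> B A"
    and Q: "subgroup Q E"
    and P: "P = \<phi> ` Q"
    and u: "u \<in> normalizer D P"
    and v: "v \<in> normalizer E Q"
    and \<alpha>: "\<alpha> \<in> A (generate D (insert u P)) (\<alpha> ` generate D (insert u P))"
    and \<beta>: "\<beta> \<in> B (generate E (insert v Q)) (\<beta> ` generate E (insert v Q))"
    and res: "\<forall>x\<in>P. \<alpha> x = \<phi> (\<beta> (inv_into (carrier E) \<phi> x))"
    and uv: "\<alpha> u = \<phi> (\<beta> v)"
  shows "(\<exists>\<psi> \<in> A (generate D (insert u P)) (generate D (insert (\<phi> v) P)).
            \<psi> ` generate D (insert u P) = generate D (insert (\<phi> v) P) \<and>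
            (\<forall>x\<in>P. \<psi> x = x) \<and> \<psi> u = \<phi> v)
       \<and> fusion_conjugate D (normalizer_subsystem D A P) u (\<phi> v)
       \<and> (\<exists>\<omega> \<in> B (generate E (insert v Q)) (generate E (insert (inv_into (carrier E) \<phi> u) Q)).
            \<omega> ` generate E (insert v Q) = generate E (insert (inv_into (carrier E) \<phi> u) Q) \<and>
            (\<forall>x\<in>Q. \<omega> x = x) \<and> \<omega> v = inv_into (carrier E) \<phi> u)
       \<and> fusion_conjugate E (normalizer_subsystem E B Q) v (inv_into (carrier E) \<phi> u)"
proof -
  have fsA: "fusion_system D A" and fsB: "fusion_system E B"
    and D: "group D" and E: "group E"
    using satA satB unfolding saturated_fusion_system_def finite_p_group_def by blast+
  interpret \<phi>: group_hom E D \<phi>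
    using iso D E by (simp add: iso_def group_hom_def group_hom_axioms_def)
  have PD: "subgroup P D" using \<phi>.subgroup_img_is_subgroup[OF Q] P by simp
  have u_carrier: "u \<in> carrier D" using u normalizer_conj_image_eq[OF D PD] by blast
  have v_carrier: "v \<in> carrier E" using v normalizer_conj_image_eq[OF E Q] by blast
  have "inj_on \<phi> (carrier E)" using iso unfolding iso_def bij_betw_def by blast
  then have agree_Q: "\<forall>q\<in>Q. \<alpha> (\<phi> q) = \<phi> (\<beta> q)"
    using res subgroup.subset[OF Q] P by auto
  obtain \<psi> where \<psi>: "\<psi> \<in> A (generate D (insert u P)) (generate D (insert (\<phi> v) P))"
    "\<psi> ` generate D (insert u P) = generate D (insert (\<phi> v) P)" "\<forall>x\<in>P. \<psi> x = x" "\<psi> u = \<phi> v"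
    using induces_fusion_iso_fixing_iso_image[OF ind fsA fsB E D Q v_carrier _ \<beta> agree_Q uv] \<alpha> P
    by blast
  obtain \<omega> where \<omega>: "\<omega> \<in> B (generate E (insert v Q)) (generate E (insert (inv_into (carrier E) \<phi> u) Q))"
    "\<omega> ` generate E (insert v Q) = generate E (insert (inv_into (carrier E) \<phi> u) Q)"
    "\<forall>x\<in>Q. \<omega> x = x" "\<omega> v = inv_into (carrier E) \<phi> u"
    using induces_fusion_iso_fixing_iso_preimage[OF ind fsA fsB E D Q u_carrier _ \<beta> agree_Q uv] \<alpha> P
    by blast
  show ?thesis
    using \<psi> \<omega> fusion_conjugate_normalizer_subsystem[OF fsA D PD u \<psi>(1,3,4)]
      fusion_conjugate_normalizer_subsystem[OF fsB E Q v \<omega>(1,3,4)] by blast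
qed

end
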